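(* Let $u,v:\mathbb{C}\to\mathbb{R}$ be harmonic, $f=u+iv$, $\mathcal{R}_f=f(\mathbb{C})$, and suppose $\mathcal{D}(\mathcal{R}_f)$ contains no pair of antipodal points. Then there exist $\xi\in\partial\mathbb{D}$, $0<\phi<\pi/2$ and $\rho>0$ such that $$\mathcal{R}_f\subset\overline{D}(0,\rho)\cup\big(\mathbb{C}\setminus(\mathcal{C}_{i\xi,\phi}\cup\mathcal{C}^+_{\xi,\phi})\big).$$
   Context: $\partial\mathbb{D}$ is the unit circle; $\overline{D}(0,\rho)$ the closed disc of radius $\rho$ centered at $0$. For a set $\mathcal{R}\subset\mathbb{C}$, $e^{i\theta}\in\partial\mathbb{D}$ is an asymptotic direction of $\mathcal{R}$ if there exist $w_n\in\mathcal{R}$ and $\varepsilon_n>0$, $\varepsilon_n\to0$, with $\varepsilon_n w_n\to e^{i\theta}$; $\mathcal{D}(\mathcal{R})$ is the set of asymptotic directions. For $\xi=e^{i\beta}\in\partial\mathbb{D}$ and $0<\phi<\pi/2$: $\mathcal{C}_{\xi,\phi}=\{te^{i\theta}: t\in\mathbb{R},\ |\theta-\beta|\le\phi\}$ (whole cone) and $\mathcal{C}^+_{\xi,\phi}=\{te^{i\theta}: t\ge0,\ |\theta-\beta|\le\phi\}$ (half cone). *)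

theory Defs
  imports "HOL-Analysis.Analysis"
begin

definition harmonic :: "(complex \<Rightarrow> real) \<Rightarrow> bool" where
  "harmonic u \<longleftrightarrow>
     (\<exists>p q pxx pxy qx qy.
        (\<forall>z. (u has_derivative (\<lambda>h. Re h * p z + Im h * q z)) (at z)) \<and>
        (\<forall>z. (p has_derivative (\<lambda>h. Re h * pxx z + Im h * pxy z)) (at z)) \<and>
        (\<forall>z. (q has_derivative (\<lambda>h. Re h * qx z + Im h * qy z)) (at z)) \<and>
        continuous_on UNIV pxx \<and> continuous_on UNIV pxy \<and>
        continuous_on UNIV qx \<and> continuous_on UNIV qy \<and>
        (\<forall>z. pxx z + qy z = 0))"

definition asymp_dirs :: "complex set \<Rightarrow> complex set" where
  "asymp_dirs R = {e. e \<in> sphere 0 1 \<and>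
     (\<exists>w :: nat \<Rightarrow> complex. \<exists>\<epsilon> :: nat \<Rightarrow> real.
        (\<forall>n. w n \<in> R \<and> \<epsilon> n > 0) \<and> \<epsilon> \<longlonglongrightarrow> 0 \<and>
        (\<lambda>n. of_real (\<epsilon> n) * w n) \<longlonglongrightarrow> e)}"

definition cone_whole :: "complex \<Rightarrow> real \<Rightarrow> complex set" where
  "cone_whole \<xi> \<phi> = {of_real t * exp (\<i> * of_real \<theta>) | t \<theta>.
      \<exists>\<beta>. \<xi> = exp (\<i> * of_real \<beta>) \<and> \<bar>\<theta> - \<beta>\<bar> \<le> \<phi>}"

definition cone_half :: "complex \<Rightarrow> real \<Rightarrow> complex set" where
  "cone_half \<xi> \<phi> = {of_real t * exp (\<i> * of_real \<theta>) | t \<theta>.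
      t \<ge> 0 \<and> (\<exists>\<beta>. \<xi> = exp (\<i> * of_real \<beta>) \<and> \<bar>\<theta> - \<beta>\<bar> \<le> \<phi>)}"

end

theory Submission
  imports Defs
begin

text \<open>The directions in which a set R escapes to infinity, i.e. the limit points of
  sgn w as |w| \<rightarrow> \<infinity> within R, form a closed subset D of the unit circle contained in the
  asymptotic directions. If D has no antipodal pair, D and -D are disjoint closed sets, so by
  connectedness they cannot cover the circle: some \<zeta> has \<zeta>, -\<zeta> \<notin> D, and replacing \<zeta> by -\<zeta>
  if necessary also -i\<zeta> \<notin> D. Far away points of R then keep a positive distance \<eta> in
  direction from \<zeta>, -\<zeta> and \<xi> = -i\<zeta>, so they lie outside the cones of half-opening \<phi> < \<eta>
  around the line through \<zeta> = i\<xi> and around the ray through \<xi>.\<close>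

lemma norm_exp_ii_diff_le: "norm (exp (\<i> * of_real a) - exp (\<i> * of_real b)) \<le> \<bar>a - b\<bar>"
proof -
  have "norm (exp (\<i> * of_real a) - exp (\<i> * of_real b)) ^ 2 = 2 - 2 * cos (a - b)"
    unfolding cmod_power2 by (simp add: Re_exp Im_exp cos_diff power2_diff algebra_simps)
  also have "\<dots> = (2 * sin ((a - b) / 2)) ^ 2"
    using cos_double_sin[of "(a - b) / 2", unfolded mult_2 field_sum_of_halves] by (simp add: power_mult_distrib)
  also have "\<dots> \<le> \<bar>a - b\<bar> ^ 2"
    using power_mono[OF abs_sin_x_le_abs_x[of "(a - b) / 2"], of 2] by (simp add: power_mult_distrib power_divide)
  finally show ?thesis by (rule power2_le_imp_le) simp
qed

lemma sgn_of_real_mult_exp_ii: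
  "sgn (of_real t * exp (\<i> * of_real \<theta>)) = of_real (sgn t) * exp (\<i> * of_real \<theta>)"
  unfolding sgn_mult sgn_of_real by (simp add: sgn_div_norm)

lemma dist_sgn_le_if_in_cone_half:
  assumes "w \<in> cone_half \<xi> \<phi>" "w \<noteq> 0"
  shows "dist (sgn w) \<xi> \<le> \<phi>"
proof -
  obtain t \<theta> \<beta> where w: "w = of_real t * exp (\<i> * of_real \<theta>)" and "t \<ge> 0"
    and \<xi>: "\<xi> = exp (\<i> * of_real \<beta>)" and "\<bar>\<theta> - \<beta>\<bar> \<le> \<phi>"
    using assms(1) unfolding cone_half_def by blast
  with assms(2) have "sgn w = exp (\<i> * of_real \<theta>)"
    by (simp add: sgn_of_real_mult_exp_ii)
  then show ?thesis
    using norm_exp_ii_diff_le[of \<theta> \<beta>] \<open>\<bar>\<theta> - \<beta>\<bar> \<le> \<phi>\<close> by (simp add: \<xi> dist_norm)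
qed

lemma dist_sgn_le_if_in_cone_whole:
  assumes "w \<in> cone_whole \<xi> \<phi>" "w \<noteq> 0"
  shows "dist (sgn w) \<xi> \<le> \<phi> \<or> dist (sgn w) (- \<xi>) \<le> \<phi>"
proof -
  obtain t \<theta> \<beta> where w: "w = of_real t * exp (\<i> * of_real \<theta>)"
    and \<xi>: "\<xi> = exp (\<i> * of_real \<beta>)" and "\<bar>\<theta> - \<beta>\<bar> \<le> \<phi>"
    using assms(1) unfolding cone_whole_def by blast
  with assms(2) have "sgn w = exp (\<i> * of_real \<theta>) \<or> - sgn w = exp (\<i> * of_real \<theta>)"
    by (cases "t > 0") (auto simp: sgn_of_real_mult_exp_ii)
  moreover have "dist (exp (\<i> * of_real \<theta>)) \<xi> \<le> \<phi>"
    using norm_exp_ii_diff_le[of \<theta> \<beta>] \<open>\<bar>\<theta> - \<beta>\<bar> \<le> \<phi>\<close> by (simp add: \<xi> dist_norm)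
  ultimately show ?thesis
    by (metis dist_minus minus_minus)
qed

definition far_directions :: "complex set \<Rightarrow> complex set" where
  "far_directions R = sphere 0 1 \<inter> (\<Inter>M. closure (sgn ` {w \<in> R. M < norm w}))"

lemma closed_far_directions: "closed (far_directions R)"
  unfolding far_directions_def by (intro closed_Int closed_sphere closed_Inter) auto

lemma far_directions_subset_asymp_dirs: "far_directions R \<subseteq> asymp_dirs R"
proof
  fix e assume e: "e \<in> far_directions R"
  have "\<exists>w\<in>R. real n < norm w \<and> dist (sgn w) e < inverse (real (Suc n))" for n
  proof -
    have "e \<in> closure (sgn ` {w \<in> R. real n < norm w})"
      using e by (auto simp: far_directions_def)
    then obtain y where "y \<in> sgn ` {w \<in> R. real n < norm w}" "dist y e < inverse (real (Suc n))"
      unfolding closure_approachable by (meson inverse_positive_iff_positive of_nat_0_less_iff zero_less_Suc)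
    then show ?thesis by blast
  qed
  then obtain w where w: "\<And>n. w n \<in> R" "\<And>n. real n < norm (w n)"
    and dist_w: "\<And>n. dist (sgn (w n)) e < inverse (real (Suc n))"
    by metis
  define \<epsilon> where "\<epsilon> n = inverse (norm (w n))" for n
  have \<epsilon>_pos: "\<epsilon> n > 0" for n
    using le_less_trans[OF of_nat_0_le_iff w(2)] by (simp add: \<epsilon>_def)
  have "filterlim (\<lambda>n. norm (w n)) at_top sequentially"
    using w(2) by (intro filterlim_at_top_mono[OF filterlim_real_sequentially]) (simp add: less_imp_le)
  then have \<epsilon>_lim: "\<epsilon> \<longlonglongrightarrow> 0"
    unfolding \<epsilon>_def by (rule tendsto_inverse_0_at_top)
  have "dist (sgn (w n)) e \<le> inverse (real (Suc n))" for n
    using dist_w[of n] by linarith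
  then have "(\<lambda>n. dist (sgn (w n)) e) \<longlonglongrightarrow> 0"
    by (intro Lim_null_comparison[OF _ LIMSEQ_inverse_real_of_nat] always_eventually) simp
  then have "(\<lambda>n. sgn (w n)) \<longlonglongrightarrow> e"
    by (rule tendsto_dist_iff[THEN iffD2])
  moreover have "(\<lambda>n. of_real (\<epsilon> n) * w n) = (\<lambda>n. sgn (w n))"
    by (simp add: fun_eq_iff \<epsilon>_def sgn_div_norm scaleR_conv_of_real of_real_inverse)
  ultimately have "(\<lambda>n. of_real (\<epsilon> n) * w n) \<longlonglongrightarrow> e"
    by (simp only:)
  moreover have "e \<in> sphere 0 1"
    using e by (simp add: far_directions_def)
  ultimately show "e \<in> asymp_dirs R"
    using w(1) \<epsilon>_pos \<epsilon>_lim unfolding asymp_dirs_def by blast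
qed

lemma far_directions_avoided_eventually:
  assumes "finite E" "E \<inter> far_directions R = {}" "E \<subseteq> sphere 0 1"
  shows "\<exists>\<eta>>0. \<exists>M. \<forall>w\<in>R. M < norm w \<longrightarrow> (\<forall>e\<in>E. \<eta> \<le> dist (sgn w) e)"
  using assms
proof (induction E rule: finite_induct)
  case empty
  show ?case by (intro exI[of _ 1]) auto
next
  case (insert e E)
  then obtain \<eta> M where "\<eta> > 0" and \<eta>: "\<forall>w\<in>R. M < norm w \<longrightarrow> (\<forall>e\<in>E. \<eta> \<le> dist (sgn w) e)"
    by auto
  from insert.prems obtain M' where "e \<notin> closure (sgn ` {w \<in> R. M' < norm w})"
    by (auto simp: far_directions_def)
  then obtain \<eta>' where "\<eta>' > 0" and "\<forall>y\<in>sgn ` {w \<in> R. M' < norm w}. \<not> dist y e < \<eta>'"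
    unfolding closure_approachable by blast
  then have \<eta>': "\<forall>w\<in>R. M' < norm w \<longrightarrow> \<eta>' \<le> dist (sgn w) e"
    by (auto simp: not_less)
  have "\<forall>w\<in>R. max M M' < norm w \<longrightarrow> (\<forall>e'\<in>insert e E. min \<eta> \<eta>' \<le> dist (sgn w) e')"
    using \<eta> \<eta>' by fastforce
  then show ?case
    using \<open>\<eta> > 0\<close> \<open>\<eta>' > 0\<close> by (metis min_less_iff_conj)
qed

lemma sphere_antipodal_pair_outside:
  fixes D :: "'a::euclidean_space set"
  assumes "DIM('a) \<ge> 2" "closed D" "D \<subseteq> sphere 0 1" "\<And>e. e \<in> D \<Longrightarrow> - e \<notin> D"
  shows "\<exists>\<zeta>\<in>sphere 0 1. \<zeta> \<notin> D \<and> - \<zeta> \<notin> D"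
proof (rule ccontr)
  assume "\<not> ?thesis"
  then have cover: "sphere 0 1 \<subseteq> D \<union> uminus ` D"
    by (force simp: image_iff)
  obtain a :: 'a where "norm a = 1"
    using vector_choose_size[of 1] by auto
  with cover obtain e where "e \<in> D"
    by auto
  with assms(3) have "e \<in> D \<inter> sphere 0 1" "- e \<in> uminus ` D \<inter> sphere 0 1"
    by auto
  moreover have "D \<inter> uminus ` D \<inter> sphere 0 1 = {}"
    using assms(4) by auto
  ultimately show False
    using connected_sphere[OF assms(1)] cover assms(2) closed_negations[OF assms(2)]
    unfolding connected_closed by (metis empty_iff)
qed

lemma circle_point_antipode_quarter_turn_outside:
  assumes "closed D" "D \<subseteq> sphere 0 1" "\<And>e. e \<in> D \<Longrightarrow> - e \<notin> D"
  shows "\<exists>\<zeta>\<in>sphere 0 1. \<zeta> \<notin> D \<and> - \<zeta> \<notin> D \<and> - \<i> * \<zeta> \<notin> D"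
proof -
  obtain \<zeta> :: complex where \<zeta>: "\<zeta> \<in> sphere 0 1" "\<zeta> \<notin> D" "- \<zeta> \<notin> D"
    using sphere_antipodal_pair_outside[OF _ assms] by auto
  show ?thesis
  proof (cases "- \<i> * \<zeta> \<in> D")
    case True
    then have "- \<i> * (- \<zeta>) \<notin> D"
      using assms(3) by force
    with \<zeta> show ?thesis
      by (intro bexI[of _ "- \<zeta>"]) auto
  next
    case False
    with \<zeta> show ?thesis by blast
  qed
qed

lemma bounded_off_cones_if_no_antipodal_asymp_dirs:
  fixes R :: "complex set"
  assumes "\<And>e. e \<in> asymp_dirs R \<Longrightarrow> - e \<notin> asymp_dirs R"
  shows "\<exists>\<xi> \<phi> \<rho>. \<xi> \<in> sphere 0 1 \<and> 0 < \<phi> \<and> \<phi> < pi / 2 \<and> \<rho> > 0 \<and>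
           R \<subseteq> cball 0 \<rho> \<union> (UNIV - (cone_whole (\<i> * \<xi>) \<phi> \<union> cone_half \<xi> \<phi>))"
proof -
  have "far_directions R \<subseteq> sphere 0 1"
    by (auto simp: far_directions_def)
  with closed_far_directions obtain \<zeta> where \<zeta>: "\<zeta> \<in> sphere 0 1"
    and outside: "\<zeta> \<notin> far_directions R" "- \<zeta> \<notin> far_directions R" "- \<i> * \<zeta> \<notin> far_directions R"
    using circle_point_antipode_quarter_turn_outside assms far_directions_subset_asymp_dirs by (metis subsetD)
  define \<xi> where "\<xi> = - \<i> * \<zeta>"
  have "\<xi> \<in> sphere 0 1" and "\<i> * \<xi> = \<zeta>"
    using \<zeta> by (auto simp: \<xi>_def norm_mult)
  obtain \<eta> M where "\<eta> > 0"
    and \<eta>: "\<And>w e. w \<in> R \<Longrightarrow> M < norm w \<Longrightarrow> e \<in> {\<zeta>, - \<zeta>, \<xi>} \<Longrightarrow> \<eta> \<le> dist (sgn w) e"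
    using far_directions_avoided_eventually[of "{\<zeta>, - \<zeta>, \<xi>}" R] outside \<zeta> \<open>\<xi> \<in> sphere 0 1\<close>
    unfolding \<xi>_def by auto
  define \<phi> where "\<phi> = min \<eta> 1 / 2"
  define \<rho> where "\<rho> = max M 1"
  have "0 < \<phi>" "\<phi> < pi / 2"
    using \<open>\<eta> > 0\<close> pi_gt3 by (auto simp: \<phi>_def)
  have "\<phi> < \<eta>"
    using \<open>\<eta> > 0\<close> by (simp add: \<phi>_def)
  have "w \<notin> cone_whole \<zeta> \<phi> \<and> w \<notin> cone_half \<xi> \<phi>" if w: "w \<in> R" "\<rho> < norm w" for w
  proof -
    have "M < norm w" "w \<noteq> 0"
      using w(2) by (auto simp: \<rho>_def)
    then have "\<phi> < dist (sgn w) \<zeta>" "\<phi> < dist (sgn w) (- \<zeta>)" "\<phi> < dist (sgn w) \<xi>"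
      using \<eta>[OF w(1)] \<open>\<phi> < \<eta>\<close> by (meson insertCI order_less_le_trans)+
    with \<open>w \<noteq> 0\<close> show ?thesis
      using dist_sgn_le_if_in_cone_whole[of w \<zeta> \<phi>] dist_sgn_le_if_in_cone_half[of w \<xi> \<phi>]
      by (meson not_le)
  qed
  then have "R \<subseteq> cball 0 \<rho> \<union> (UNIV - (cone_whole (\<i> * \<xi>) \<phi> \<union> cone_half \<xi> \<phi>))"
    using \<open>\<i> * \<xi> = \<zeta>\<close> by (auto simp: not_le)
  moreover have "\<rho> > 0"
    by (simp add: \<rho>_def)
  ultimately show ?thesis
    using \<open>\<xi> \<in> sphere 0 1\<close> \<open>0 < \<phi>\<close> \<open>\<phi> < pi / 2\<close> by blast
qed

theorem lemma2:
  fixes u v :: "complex \<Rightarrow> real" and f :: "complex \<Rightarrow> complex"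
  assumes "harmonic u" and "harmonic v"
    and "\<And>z. f z = of_real (u z) + \<i> * of_real (v z)"
    and "\<not> (\<exists>e. e \<in> asymp_dirs (range f) \<and> - e \<in> asymp_dirs (range f))"
  shows "\<exists>\<xi> \<phi> \<rho>. \<xi> \<in> sphere 0 1 \<and> 0 < \<phi> \<and> \<phi> < pi / 2 \<and> \<rho> > 0 \<and>
           range f \<subseteq> cball 0 \<rho> \<union> (UNIV - (cone_whole (\<i> * \<xi>) \<phi> \<union> cone_half \<xi> \<phi>))"
  using assms(4) by (intro bounded_off_cones_if_no_antipodal_asymp_dirs) blast

end
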